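(* Let $\bar P_1,\bar P_2>0$ and $0<h_1\le h_2$. For $\mathbf P=(P_1,P_2)$ with $0\le P_k\le\bar P_k$ let $$R(\mathbf P)=\tfrac12\big[\log(1+P_1)+\log(1+P_2)-\log(1+h_1P_1+h_2P_2)\big]^+ .$$ Then the following allocation maximizes $R$ over $[0,\bar P_1]\times[0,\bar P_2]$: $$(P^*_1,P^*_2)=\begin{cases}(\bar P_1,\bar P_2),&\text{if } h_1\le1+h_2\bar P_2\text{ and }h_2<1+h_1\bar P_1,\\(\bar P_1,0),&\text{if } h_1<1\text{ and }h_2\ge1+h_1\bar P_1,\\(0,0),&\text{otherwise.}\end{cases}$$
   Context: $\log$ base 2, $[x]^+=\max\{x,0\}$. $R(\mathbf P)$ is the secrecy sum-rate bound of the superposition region of the standardized Gaussian two-way wire-tap channel, with $h_1,h_2$ the standardized eavesdropper gains of terminals 1 and 2. *)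

theory Defs
  imports Complex_Main
begin

definition secR :: "real \<Rightarrow> real \<Rightarrow> real \<Rightarrow> real \<Rightarrow> real" where
  "secR h1 h2 P1 P2 =
     (1/2) * max (log 2 (1 + P1) + log 2 (1 + P2) - log 2 (1 + h1 * P1 + h2 * P2)) 0"

definition opt_alloc :: "real \<Rightarrow> real \<Rightarrow> real \<Rightarrow> real \<Rightarrow> real \<times> real" where
  "opt_alloc h1 h2 Pb1 Pb2 =
     (if h1 \<le> 1 + h2 * Pb2 \<and> h2 < 1 + h1 * Pb1 then (Pb1, Pb2)
      else if h1 < 1 \<and> h2 \<ge> 1 + h1 * Pb1 then (Pb1, 0)
      else (0, 0))"

end

theory Submission
  imports Defs
begin

text \<open>
  Since \<open>[log g]\<^sup>+ = log (max g 1)\<close>, maximising \<open>R\<close> amounts to maximising the ratio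
  \<open>g(P) = (1 + P\<^sub>1)(1 + P\<^sub>2) / (1 + h\<^sub>1P\<^sub>1 + h\<^sub>2P\<^sub>2)\<close> (clipped at 1). For every level \<open>M\<close>
  the set \<open>g \<le> M\<close> is described by \<open>(1 + P\<^sub>1)(1 + P\<^sub>2) - M(1 + h\<^sub>1P\<^sub>1 + h\<^sub>2P\<^sub>2) \<le> 0\<close>,
  a bilinear condition, so on a rectangle \<open>g\<close> is bounded by its values at the four corners.
  Along an edge, \<open>g\<close> is a linear-fractional function of one power whose monotonicity is decided by
  comparing the gain \<open>h\<^sub>k\<close> with \<open>1 + h\<^sub>jP\<^sub>j\<close>; this comparison of the corners yields the
  three cases of the allocation.
\<close>

lemma affine_le_max_endpoints:
  fixes a b t T :: real
  assumes "t \<in> {0..T}"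
  shows "a + t * b \<le> max a (a + T * b)"
proof (cases "b \<ge> 0")
  case True
  then have "t * b \<le> T * b" using assms by (simp add: mult_right_mono)
  then show ?thesis by simp
next
  case False
  then have "t * b \<le> 0" using assms by (simp add: mult_nonneg_nonpos)
  then show ?thesis by simp
qed

lemma bilinear_le_max_corners:
  fixes f :: "real \<Rightarrow> real \<Rightarrow> real"
  assumes f: "\<And>x y. f x y = a + b * x + c * y + d * x * y"
    and x: "x \<in> {0..X}" and y: "y \<in> {0..Y}"
  shows "f x y \<le> max (max (f 0 0) (f X 0)) (max (f 0 Y) (f X Y))"
proof -
  have in_x: "f x' y' \<le> max (f 0 y') (f X y')" if "x' \<in> {0..X}" for x' y'
    using affine_le_max_endpoints[OF that, of "f 0 y'" "b + d * y'"]
    by (simp add: f algebra_simps)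
  have in_y: "f x' y \<le> max (f x' 0) (f x' Y)" for x'
    using affine_le_max_endpoints[OF y, of "f x' 0" "c + d * x'"]
    by (simp add: f algebra_simps)
  show ?thesis
    using in_x[OF x, of y] in_y[of 0] in_y[of X] by linarith
qed

definition secrecy_ratio :: "real \<Rightarrow> real \<Rightarrow> real \<Rightarrow> real \<Rightarrow> real" where
  "secrecy_ratio h1 h2 P1 P2 = (1 + P1) * (1 + P2) / (1 + h1 * P1 + h2 * P2)"

lemma secrecy_ratio_swap: "secrecy_ratio h1 h2 P1 P2 = secrecy_ratio h2 h1 P2 P1"
  by (simp add: secrecy_ratio_def algebra_simps)

lemma secrecy_ratio_zero_zero [simp]: "secrecy_ratio h1 h2 0 0 = 1"
  by (simp add: secrecy_ratio_def)

lemma secrecy_ratio_pos: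
  assumes "0 \<le> h1" "0 \<le> h2" "0 \<le> P1" "0 \<le> P2"
  shows "0 < secrecy_ratio h1 h2 P1 P2"
proof -
  have "0 < 1 + h1 * P1 + h2 * P2" using assms by (simp add: add_pos_nonneg)
  then show ?thesis
    unfolding secrecy_ratio_def using assms by (intro divide_pos_pos mult_pos_pos) auto
qed

lemma secR_eq_log_secrecy_ratio:
  assumes "0 \<le> h1" "0 \<le> h2" "0 \<le> P1" "0 \<le> P2"
  shows "secR h1 h2 P1 P2 = log 2 (max (secrecy_ratio h1 h2 P1 P2) 1) / 2"
proof -
  let ?g = "secrecy_ratio h1 h2 P1 P2"
  have "0 < 1 + h1 * P1 + h2 * P2" using assms by (simp add: add_pos_nonneg)
  then have "log 2 ?g = log 2 (1 + P1) + log 2 (1 + P2) - log 2 (1 + h1 * P1 + h2 * P2)"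
    using assms by (simp add: secrecy_ratio_def log_mult log_divide)
  moreover have "max (log 2 ?g) 0 = log 2 (max ?g 1)"
    using secrecy_ratio_pos[OF assms] by (simp add: max_def)
  ultimately show ?thesis by (simp add: secR_def)
qed

lemma secR_mono_secrecy_ratio:
  assumes "0 \<le> h1" "0 \<le> h2" "0 \<le> P1" "0 \<le> P2" "0 \<le> Q1" "0 \<le> Q2"
    and "secrecy_ratio h1 h2 P1 P2 \<le> max (secrecy_ratio h1 h2 Q1 Q2) 1"
  shows "secR h1 h2 P1 P2 \<le> secR h1 h2 Q1 Q2"
  using assms by (simp add: secR_eq_log_secrecy_ratio)

lemma secrecy_ratio_le_iff:
  assumes "0 \<le> h1" "0 \<le> h2" "0 \<le> P1" "0 \<le> P2"
  shows "secrecy_ratio h1 h2 P1 P2 \<le> M \<longleftrightarrow>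
         (1 + P1) * (1 + P2) - M * (1 + h1 * P1 + h2 * P2) \<le> 0"
proof -
  have "0 < 1 + h1 * P1 + h2 * P2" using assms by (simp add: add_pos_nonneg)
  then show ?thesis by (simp add: secrecy_ratio_def divide_le_eq algebra_simps)
qed

lemma secrecy_ratio_le_max_corners:
  assumes "0 \<le> h1" "0 \<le> h2" and x: "x \<in> {0..X}" and y: "y \<in> {0..Y}"
  defines "g \<equiv> secrecy_ratio h1 h2"
  shows "g x y \<le> max (max (g 0 0) (g X 0)) (max (g 0 Y) (g X Y))"
proof -
  define M where "M = max (max (g 0 0) (g X 0)) (max (g 0 Y) (g X Y))"
  define F where "F = (\<lambda>x y. (1 + x) * (1 + y) - M * (1 + h1 * x + h2 * y))"
  have F_bilinear: "F x y = (1 - M) + (1 - M * h1) * x + (1 - M * h2) * y + 1 * x * y" for x y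
    by (simp add: F_def algebra_simps)
  have g_le_M_iff: "g x' y' \<le> M \<longleftrightarrow> F x' y' \<le> 0" if "0 \<le> x'" "0 \<le> y'" for x' y'
    using secrecy_ratio_le_iff[OF assms(1,2) that] by (simp add: g_def F_def)
  have "0 \<le> X" "0 \<le> Y" using x y by auto
  moreover have "g 0 0 \<le> M" "g X 0 \<le> M" "g 0 Y \<le> M" "g X Y \<le> M"
    by (simp_all add: M_def)
  ultimately have "F 0 0 \<le> 0" "F X 0 \<le> 0" "F 0 Y \<le> 0" "F X Y \<le> 0"
    using g_le_M_iff by simp_all
  then have "F x y \<le> 0"
    using bilinear_le_max_corners[of F, OF F_bilinear x y] by simp
  then show ?thesis using g_le_M_iff x y by (simp add: M_def)
qed

text \<open>
  \<open>(1 + y)(1 + h\<^sub>1x) - (1 + h\<^sub>1x + h\<^sub>2y) = y(1 + h\<^sub>1x - h\<^sub>2)\<close>: adding power \<open>y\<close> to the second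
  terminal helps exactly when \<open>h\<^sub>2 \<le> 1 + h\<^sub>1x\<close>.
\<close>

lemma secrecy_ratio_increasing_second:
  assumes "0 \<le> h1" "0 \<le> h2" "0 \<le> x" "0 \<le> y" "h2 \<le> 1 + h1 * x"
  shows "secrecy_ratio h1 h2 x 0 \<le> secrecy_ratio h1 h2 x y"
proof -
  have "1 + h1 * x + h2 * y \<le> (1 + y) * (1 + h1 * x)"
    using mult_right_mono[OF assms(5,4)] by (simp add: algebra_simps)
  then have "(1 + x) * (1 + h1 * x + h2 * y) \<le> (1 + x) * ((1 + y) * (1 + h1 * x))"
    using assms(3) by (simp add: mult_left_mono)
  then show ?thesis using assms
    by (simp add: secrecy_ratio_def divide_le_eq le_divide_eq add_pos_nonneg algebra_simps)
qed

lemma secrecy_ratio_decreasing_second: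
  assumes "0 \<le> h1" "0 \<le> h2" "0 \<le> x" "0 \<le> y" "1 + h1 * x \<le> h2"
  shows "secrecy_ratio h1 h2 x y \<le> secrecy_ratio h1 h2 x 0"
proof -
  have "(1 + y) * (1 + h1 * x) \<le> 1 + h1 * x + h2 * y"
    using mult_right_mono[OF assms(5,4)] by (simp add: algebra_simps)
  then have "(1 + x) * ((1 + y) * (1 + h1 * x)) \<le> (1 + x) * (1 + h1 * x + h2 * y)"
    using assms(3) by (simp add: mult_left_mono)
  then show ?thesis using assms
    by (simp add: secrecy_ratio_def divide_le_eq le_divide_eq add_pos_nonneg algebra_simps)
qed

lemma secrecy_ratio_increasing_first:
  assumes "0 \<le> h1" "0 \<le> h2" "0 \<le> x" "0 \<le> y" "h1 \<le> 1 + h2 * y"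
  shows "secrecy_ratio h1 h2 0 y \<le> secrecy_ratio h1 h2 x y"
  using secrecy_ratio_increasing_second[of h2 h1 y x] assms by (simp add: secrecy_ratio_swap)

lemma secrecy_ratio_decreasing_first:
  assumes "0 \<le> h1" "0 \<le> h2" "0 \<le> x" "0 \<le> y" "1 + h2 * y \<le> h1"
  shows "secrecy_ratio h1 h2 x y \<le> secrecy_ratio h1 h2 0 y"
  using secrecy_ratio_decreasing_second[of h2 h1 y x] assms by (simp add: secrecy_ratio_swap)

lemma opt_alloc_dominates_corners:
  fixes Pb1 Pb2 h1 h2 :: real
  assumes "Pb1 > 0" "Pb2 > 0" "0 < h1" "h1 \<le> h2"
    and "x \<in> {0, Pb1}" "y \<in> {0, Pb2}"
  defines "g \<equiv> secrecy_ratio h1 h2"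
  shows "g x y \<le> max (g (fst (opt_alloc h1 h2 Pb1 Pb2)) (snd (opt_alloc h1 h2 Pb1 Pb2))) 1"
proof -
  have nonneg: "0 \<le> h1" "0 \<le> h2" "0 \<le> Pb1" "0 \<le> Pb2" "0 \<le> h1 * Pb1" "0 \<le> h2 * Pb2"
    using assms by auto
  note incr2 = secrecy_ratio_increasing_second[OF nonneg(1,2), folded g_def]
   and decr2 = secrecy_ratio_decreasing_second[OF nonneg(1,2), folded g_def]
   and incr1 = secrecy_ratio_increasing_first[OF nonneg(1,2), folded g_def]
   and decr1 = secrecy_ratio_decreasing_first[OF nonneg(1,2), folded g_def]
  have g00: "g 0 0 = 1" by (simp add: g_def)
  consider (full) "h1 \<le> 1 + h2 * Pb2" "h2 < 1 + h1 * Pb1"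
    | (first_only) "h1 < 1" "1 + h1 * Pb1 \<le> h2"
    | (silent_h2) "1 \<le> h1" "1 + h1 * Pb1 \<le> h2"
    | (silent_h1) "1 + h2 * Pb2 < h1"
    by linarith
  then show ?thesis
  proof cases
    case full
    then have "opt_alloc h1 h2 Pb1 Pb2 = (Pb1, Pb2)" using nonneg by (simp add: opt_alloc_def)
    moreover have "g Pb1 0 \<le> g Pb1 Pb2" using incr2 full nonneg by simp
    moreover have "g 0 Pb2 \<le> g Pb1 Pb2" using incr1 full nonneg by simp
    ultimately show ?thesis using assms(5,6) g00 by auto
  next
    case first_only
    then have "opt_alloc h1 h2 Pb1 Pb2 = (Pb1, 0)" using nonneg by (auto simp: opt_alloc_def)
    moreover have "g Pb1 Pb2 \<le> g Pb1 0" using decr2 first_only nonneg by simp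
    moreover have "g 0 Pb2 \<le> g 0 0" using decr2[of 0 Pb2] first_only nonneg by simp
    ultimately show ?thesis using assms(5,6) g00 by auto
  next
    case silent_h2
    then have "opt_alloc h1 h2 Pb1 Pb2 = (0, 0)" using nonneg by (auto simp: opt_alloc_def)
    moreover have "g Pb1 0 \<le> g 0 0" using decr1[of Pb1 0] silent_h2 nonneg by simp
    moreover have "g 0 Pb2 \<le> g 0 0" using decr2[of 0 Pb2] silent_h2 nonneg by simp
    moreover have "g Pb1 Pb2 \<le> g Pb1 0" using decr2 silent_h2 nonneg by simp
    ultimately show ?thesis using assms(5,6) g00 by auto
  next
    case silent_h1
    then have "\<not> h1 < 1" using nonneg by linarith
    with silent_h1 have "opt_alloc h1 h2 Pb1 Pb2 = (0, 0)" by (simp add: opt_alloc_def)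
    moreover have "g Pb1 0 \<le> g 0 0" using decr1[of Pb1 0] silent_h1 nonneg by simp
    moreover have "g 0 Pb2 \<le> g 0 0" using decr2[of 0 Pb2] silent_h1 nonneg assms(4) by simp
    moreover have "g Pb1 Pb2 \<le> g 0 Pb2" using decr1 silent_h1 nonneg by simp
    ultimately show ?thesis using assms(5,6) g00 by auto
  qed
qed

theorem theorem4:
  fixes Pb1 Pb2 h1 h2 :: real
  assumes "Pb1 > 0" and "Pb2 > 0" and "0 < h1" and "h1 \<le> h2"
  shows "fst (opt_alloc h1 h2 Pb1 Pb2) \<in> {0..Pb1} \<and> snd (opt_alloc h1 h2 Pb1 Pb2) \<in> {0..Pb2} \<and>
         (\<forall>P1 \<in> {0..Pb1}. \<forall>P2 \<in> {0..Pb2}.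
            secR h1 h2 P1 P2 \<le> secR h1 h2 (fst (opt_alloc h1 h2 Pb1 Pb2)) (snd (opt_alloc h1 h2 Pb1 Pb2)))"
proof -
  define Q1 where "Q1 = fst (opt_alloc h1 h2 Pb1 Pb2)"
  define Q2 where "Q2 = snd (opt_alloc h1 h2 Pb1 Pb2)"
  have Q_box: "Q1 \<in> {0..Pb1}" "Q2 \<in> {0..Pb2}"
    using assms by (auto simp: Q1_def Q2_def opt_alloc_def)
  have "secR h1 h2 P1 P2 \<le> secR h1 h2 Q1 Q2" if P: "P1 \<in> {0..Pb1}" "P2 \<in> {0..Pb2}" for P1 P2
  proof (rule secR_mono_secrecy_ratio)
    let ?g = "secrecy_ratio h1 h2"
    have corner: "?g x y \<le> max (?g Q1 Q2) 1" if "x \<in> {0, Pb1}" "y \<in> {0, Pb2}" for x y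
      using opt_alloc_dominates_corners[OF assms that] by (simp add: Q1_def Q2_def)
    have "?g P1 P2 \<le> max (max (?g 0 0) (?g Pb1 0)) (max (?g 0 Pb2) (?g Pb1 Pb2))"
      using secrecy_ratio_le_max_corners[OF _ _ P] assms by simp
    also have "\<dots> \<le> max (?g Q1 Q2) 1"
      using corner[of 0 0] corner[of Pb1 0] corner[of 0 Pb2] corner[of Pb1 Pb2] by simp
    finally show "?g P1 P2 \<le> max (?g Q1 Q2) 1" .
  qed (use assms P Q_box in auto)
  then show ?thesis using Q_box by (simp add: Q1_def Q2_def)
qed

end
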